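(* Let $1<r<\infty$. There is $C<\infty$ (depending only on $n,r$) such that for all $x\in\mathbb{R}^n$, $t>0$ and all locally $r$-integrable $f$ on $\mathbb{R}^n$, $$\left(\frac{1}{|B(x,t)|}\int_{B(x,t)}|\mathcal{M}(f)(y)|^r\,dy\right)^{1/r}\le C\left(\frac{1}{|B(x,2t)|}\int_{B(x,2t)}|f(y)|^r\,dy\right)^{1/r}+C\,\mathcal{M}_u\!\left(\frac{1}{|B(\cdot,t)|}\int_{B(\cdot,t)}|f(z)|\,dz\right)(x).$$
   Context: $\mathcal{M}$ is the centered Hardy–Littlewood maximal operator $\mathcal{M}(f)(x)=\sup_{\tau>0}\frac{1}{|B(x,\tau)|}\int_{B(x,\tau)}|f|$, and $\mathcal{M}_u$ is the uncentered Hardy–Littlewood maximal operator (supremum of averages over all balls containing the point). *)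

theory Defs
  imports "HOL-Analysis.Analysis"
begin

definition enn_powr :: "ennreal \<Rightarrow> real \<Rightarrow> ennreal" where
  "enn_powr e p = (if e = \<infinity> then \<infinity> else ennreal (enn2real e powr p))"

definition ball_avg :: "('a::euclidean_space \<Rightarrow> ennreal) \<Rightarrow> 'a \<Rightarrow> real \<Rightarrow> ennreal" where
  "ball_avg g c s = (\<integral>\<^sup>+ y\<in>ball c s. g y \<partial>lebesgue) / emeasure lebesgue (ball c s)"

definition maximal_c :: "('a::euclidean_space \<Rightarrow> real) \<Rightarrow> 'a \<Rightarrow> ennreal" where
  "maximal_c f x = (SUP \<tau>\<in>{0<..}. ball_avg (\<lambda>y. ennreal \<bar>f y\<bar>) x \<tau>)"

definition maximal_u :: "('a::euclidean_space \<Rightarrow> ennreal) \<Rightarrow> 'a \<Rightarrow> ennreal" where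
  "maximal_u g x = (SUP p\<in>{(c, s). s > 0 \<and> x \<in> ball c s}. ball_avg g (fst p) (snd p))"

definition locally_Lp :: "real \<Rightarrow> ('a::euclidean_space \<Rightarrow> real) \<Rightarrow> bool" where
  "locally_Lp r f \<longleftrightarrow> f \<in> borel_measurable lebesgue \<and>
     (\<forall>K. compact K \<longrightarrow> (\<integral>\<^sup>+ y\<in>K. ennreal (\<bar>f y\<bar> powr r) \<partial>lebesgue) < \<infinity>)"

end

theory Submission
  imports Defs
begin

text \<open>
  Fix \<open>x\<close> and \<open>t\<close> and let \<open>y \<in> B(x,t)\<close>. Averages of \<open>|f|\<close> over balls \<open>B(y,\<tau>)\<close> with
  \<open>\<tau> \<le> t\<close> only see \<open>f\<close> on \<open>B(x,2t)\<close>. For \<open>\<tau> > t\<close>, Fubini bounds the average over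
  \<open>B(y,\<tau>)\<close> by \<open>((\<tau>+t)/\<tau>)\<^sup>n \<le> 2\<^sup>n\<close> times the average over \<open>B(y,\<tau>+t)\<close> of the
  \<open>t\<close>-averages of \<open>|f|\<close>, and this ball contains \<open>x\<close>. Hence on \<open>B(x,t)\<close>
  \<open>\<M> f \<le> \<M> (f \<one>\<^bsub>B(x,2t)\<^esub>) + 2\<^sup>n \<M>\<^sub>u(avg\<^sub>t |f|)(x)\<close>,
  and the first term is controlled by the strong \<open>(r,r)\<close> bound for \<open>\<M>\<close>, which follows from
  the Vitali weak \<open>(1,1)\<close> bound applied to truncations and the layer-cake formula.
\<close>

lemma emeasure_ball:
  fixes c :: "'a::euclidean_space"
  assumes "0 \<le> s"
  shows "emeasure lborel (ball c s) = ennreal (s ^ DIM('a) * measure lborel (ball (0::'a) 1))"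
  using emeasure_lborel_ball_finite[of c s] content_ball_conv_unit_ball[OF assms, of c]
  by (simp add: emeasure_eq_ennreal_measure)

lemma ball_in_sets_borel [measurable]: "ball (c::'a::metric_space) s \<in> sets borel"
  by (simp add: borel_open)

lemma emeasure_ball_scale:
  fixes c :: "'a::euclidean_space"
  assumes "0 \<le> s" "0 \<le> a"
  shows "emeasure lborel (ball c (a * s)) = ennreal (a ^ DIM('a)) * emeasure lborel (ball c s)"
  using assms by (simp add: emeasure_ball power_mult_distrib ennreal_mult[symmetric] mult_ac)

lemma ball_avg_eq:
  fixes c :: "'a::euclidean_space"
  assumes "0 < s"
  shows "ball_avg g c s =
    ennreal (1 / (s ^ DIM('a) * measure lborel (ball (0::'a) 1))) * (\<integral>\<^sup>+z\<in>ball c s. g z \<partial>lborel)"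
proof -
  have "0 < s ^ DIM('a) * measure lborel (ball (0::'a) 1)"
    using assms by (simp add: content_ball_pos)
  then show ?thesis
    using assms unfolding ball_avg_def nn_integral_completion
    by (simp add: emeasure_ball divide_ennreal_def inverse_ennreal mult.commute inverse_eq_divide)
qed

lemma set_nn_integral_ball_eq_ball_avg:
  fixes c :: "'a::euclidean_space"
  assumes "0 < s"
  shows "(\<integral>\<^sup>+z\<in>ball c s. g z \<partial>lborel)
    = ennreal (s ^ DIM('a) * measure lborel (ball (0::'a) 1)) * ball_avg g c s"
proof -
  have "0 < s ^ DIM('a) * measure lborel (ball (0::'a) 1)"
    using assms by (simp add: content_ball_pos)
  then show ?thesis
    using assms by (simp add: ball_avg_eq mult.assoc[symmetric] ennreal_mult[symmetric])
qed

lemma ball_avg_cong_AE: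
  "AE y in lebesgue. g y = h y \<Longrightarrow> ball_avg g c s = ball_avg h c s"
  unfolding ball_avg_def by (intro arg_cong2[where f="(/)"] nn_integral_cong_AE) auto

lemma ball_avg_le_enlarged_ball:
  fixes y y' :: "'a::euclidean_space"
  assumes "0 < \<tau>" "0 \<le> d" "dist y y' \<le> d"
  shows "ball_avg g y \<tau> * ennreal ((\<tau> / (\<tau> + d)) ^ DIM('a)) \<le> ball_avg g y' (\<tau> + d)"
proof -
  define V where "V = measure lborel (ball (0::'a) 1)"
  have V: "0 < V" unfolding V_def by (simp add: content_ball_pos)
  have "ball y \<tau> \<subseteq> ball y' (\<tau> + d)"
  proof
    fix z assume "z \<in> ball y \<tau>"
    then show "z \<in> ball y' (\<tau> + d)"
      using assms dist_triangle[of y' z y] by (simp add: dist_commute)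
  qed
  then have int_le: "(\<integral>\<^sup>+z\<in>ball y \<tau>. g z \<partial>lborel) \<le> (\<integral>\<^sup>+z\<in>ball y' (\<tau> + d). g z \<partial>lborel)"
    by (intro nn_integral_mono mult_left_mono) (auto simp: indicator_def)
  have vol: "ennreal (1 / (\<tau> ^ DIM('a) * V)) * ennreal ((\<tau> / (\<tau> + d)) ^ DIM('a))
      = ennreal (1 / ((\<tau> + d) ^ DIM('a) * V))"
    using assms V by (simp add: ennreal_mult[symmetric] power_divide)
  have "ball_avg g y \<tau> * ennreal ((\<tau> / (\<tau> + d)) ^ DIM('a))
      = ennreal (1 / ((\<tau> + d) ^ DIM('a) * V)) * (\<integral>\<^sup>+z\<in>ball y \<tau>. g z \<partial>lborel)"
    unfolding ball_avg_eq[OF assms(1)] V_def[symmetric] vol[symmetric] by (simp only: ac_simps)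
  also have "\<dots> \<le> ennreal (1 / ((\<tau> + d) ^ DIM('a) * V)) * (\<integral>\<^sup>+z\<in>ball y' (\<tau> + d). g z \<partial>lborel)"
    by (rule mult_left_mono[OF int_le]) simp
  also have "\<dots> = ball_avg g y' (\<tau> + d)"
    using assms by (simp add: ball_avg_eq V_def)
  finally show ?thesis .
qed

text \<open>\<open>maximal_c f = centered_maximal (\<lambda>y. ennreal \<bar>f y\<bar>)\<close>; the general form is applied to
  truncations and to Borel representatives of \<open>f\<close>.\<close>
definition centered_maximal :: "('a::euclidean_space \<Rightarrow> ennreal) \<Rightarrow> 'a \<Rightarrow> ennreal" where
  "centered_maximal g x = (SUP \<tau>\<in>{0<..}. ball_avg g x \<tau>)"

lemma ball_avg_le_centered_maximal: "0 < \<tau> \<Longrightarrow> ball_avg g x \<tau> \<le> centered_maximal g x"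
  unfolding centered_maximal_def by (rule SUP_upper) simp

lemma open_centered_maximal_greater: "open {y. s < centered_maximal g y}"
proof (rule openI)
  fix y assume "y \<in> {y. s < centered_maximal g y}"
  then obtain \<tau> where \<tau>: "0 < \<tau>" and s: "s < ball_avg g y \<tau>"
    unfolding centered_maximal_def by (auto simp: less_SUP_iff)
  have "((\<lambda>d. (\<tau> / (\<tau> + d)) ^ DIM('a)) \<longlongrightarrow> 1) (at_right 0)"
    using \<tau> by (auto intro!: tendsto_eq_intros)
  then have "((\<lambda>d. ball_avg g y \<tau> * ennreal ((\<tau> / (\<tau> + d)) ^ DIM('a))) \<longlongrightarrow> ball_avg g y \<tau>) (at_right 0)"
    using tendsto_mult_ennreal[OF tendsto_const tendsto_ennrealI] by fastforce
  then have "\<forall>\<^sub>F d in at_right 0. s < ball_avg g y \<tau> * ennreal ((\<tau> / (\<tau> + d)) ^ DIM('a))"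
    using s by (rule order_tendstoD)
  then obtain d where d: "0 < d" and sd: "s < ball_avg g y \<tau> * ennreal ((\<tau> / (\<tau> + d)) ^ DIM('a))"
    by (auto simp: eventually_at_right_field dest: dense)
  have "s < centered_maximal g y'" if "y' \<in> ball y d" for y'
  proof -
    have "s < ball_avg g y' (\<tau> + d)"
      using sd ball_avg_le_enlarged_ball[of \<tau> d y y' g] \<tau> d that by simp
    also have "\<dots> \<le> centered_maximal g y'"
      using \<tau> d by (intro ball_avg_le_centered_maximal) simp
    finally show ?thesis .
  qed
  then show "\<exists>e>0. ball y e \<subseteq> {y. s < centered_maximal g y}"
    using d by blast
qed

lemma borel_measurable_centered_maximal[measurable]:
  "centered_maximal g \<in> borel_measurable borel"
  by (rule borel_measurableI_greater) (simp add: open_centered_maximal_greater borel_open)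

lemma emeasure_UN_le_of_finite_UN_le:
  assumes "countable C" and "\<And>i. i \<in> C \<Longrightarrow> A i \<in> sets M"
    and "\<And>F. finite F \<Longrightarrow> F \<subseteq> C \<Longrightarrow> emeasure M (\<Union>i\<in>F. A i) \<le> b"
  shows "emeasure M (\<Union>i\<in>C. A i) \<le> b"
proof (cases "C = {}")
  case False
  define e where "e = from_nat_into C"
  have range_e: "range e = C" unfolding e_def using False assms(1) by simp
  define B where "B m = (\<Union>i\<in>e ` {..<m}. A i)" for m
  have "emeasure M (\<Union>i\<in>C. A i) = emeasure M (\<Union>m. B m)"
    unfolding B_def range_e[symmetric] by (rule arg_cong[where f="emeasure M"]) auto
  also have "\<dots> = (SUP m. emeasure M (B m))"
  proof (rule SUP_emeasure_incseq[symmetric])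
    show "range B \<subseteq> sets M" unfolding B_def using assms(2) range_e by (auto intro!: sets.finite_UN)
    show "incseq B" unfolding incseq_def B_def by (intro allI impI UN_mono image_mono) auto
  qed
  also have "\<dots> \<le> b"
    unfolding B_def using range_e by (intro SUP_least assms(3)) auto
  finally show ?thesis .
qed simp

lemma sum_set_nn_integral_le_nn_integral:
  assumes "finite F" "disjoint_family_on A F" "\<And>i. i \<in> F \<Longrightarrow> A i \<in> sets M"
    and [measurable]: "g \<in> borel_measurable M"
  shows "(\<Sum>i\<in>F. \<integral>\<^sup>+z\<in>A i. g z \<partial>M) \<le> (\<integral>\<^sup>+z. g z \<partial>M)"
proof -
  have "(\<Sum>i\<in>F. \<integral>\<^sup>+z\<in>A i. g z \<partial>M) = (\<integral>\<^sup>+z. g z * indicator (\<Union>i\<in>F. A i) z \<partial>M)"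
    using assms by (simp add: nn_integral_sum[symmetric] sum_distrib_left indicator_UN_disjoint)
  also have "\<dots> \<le> (\<integral>\<^sup>+z. g z \<partial>M)"
    by (intro nn_integral_mono) (simp add: indicator_def)
  finally show ?thesis .
qed

lemma emeasure_ball_le_of_ball_avg_greater:
  fixes y :: "'a::euclidean_space"
  assumes "0 < \<rho>" "0 < s" "ennreal s < ball_avg g y \<rho>"
  shows "emeasure lborel (ball y \<rho>) \<le> ennreal (1 / s) * (\<integral>\<^sup>+z\<in>ball y \<rho>. g z \<partial>lborel)"
proof (cases "(\<integral>\<^sup>+z\<in>ball y \<rho>. g z \<partial>lborel) = \<infinity>")
  case True
  then show ?thesis using assms(2) by (simp add: ennreal_mult_top)
next
  case False
  then obtain I where I: "(\<integral>\<^sup>+z\<in>ball y \<rho>. g z \<partial>lborel) = ennreal I" "0 \<le> I"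
    by (cases "\<integral>\<^sup>+z\<in>ball y \<rho>. g z \<partial>lborel") auto
  define m where "m = \<rho> ^ DIM('a) * measure lborel (ball (0::'a) 1)"
  have m: "0 < m" unfolding m_def using assms(1) by (simp add: content_ball_pos)
  have "ennreal s < ennreal (1 / m) * ennreal I"
    using assms(3) I by (simp add: ball_avg_eq[OF assms(1)] m_def[symmetric])
  also have "\<dots> = ennreal (I / m)" using I m by (simp add: ennreal_mult[symmetric])
  finally have "s < I / m" using assms(2) ennreal_less_iff[of s "I / m"] by simp
  then have "m \<le> 1 / s * I" using assms(2) m by (simp add: field_simps)
  then show ?thesis
    using assms I m by (simp add: emeasure_ball m_def[symmetric] ennreal_mult[symmetric] ennreal_leI)
qed

lemma radius_le_of_emeasure_ball_le:
  fixes c :: "'a::euclidean_space"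
  assumes \<rho>: "0 < \<rho>" and le: "emeasure lborel (ball c \<rho>) \<le> ennreal b"
  shows "\<rho> \<le> max 1 (b / measure lborel (ball (0::'a) 1))"
proof -
  define V where "V = measure lborel (ball (0::'a) 1)"
  have V: "0 < V" unfolding V_def by (simp add: content_ball_pos)
  have "0 < \<rho> ^ DIM('a) * V" using \<rho> V by simp
  moreover have "ennreal (\<rho> ^ DIM('a) * V) \<le> ennreal b"
    using le \<rho> by (simp add: emeasure_ball V_def)
  ultimately have vol: "\<rho> ^ DIM('a) * V \<le> b"
    by (auto simp: ennreal_le_iff2)
  have "\<rho> \<le> b / V" if "1 < \<rho>"
  proof -
    have "\<rho> * V \<le> \<rho> ^ DIM('a) * V"
      using that V by (intro mult_right_mono self_le_power) auto
    then have "\<rho> * V \<le> b" using vol by linarith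
    then show ?thesis using V by (simp add: field_simps)
  qed
  then show ?thesis unfolding V_def by fastforce
qed

lemma emeasure_UN_scaled_balls_le:
  fixes g :: "'a::euclidean_space \<Rightarrow> ennreal"
  assumes [measurable]: "g \<in> borel_measurable borel" and "finite F" "0 \<le> a"
    and disj: "disjoint_family_on (\<lambda>i. ball i (\<rho> i)) F"
    and small: "\<And>i. i \<in> F \<Longrightarrow> 0 \<le> \<rho> i \<and>
      emeasure lborel (ball i (\<rho> i)) \<le> ennreal c * (\<integral>\<^sup>+z\<in>ball i (\<rho> i). g z \<partial>lborel)"
  shows "emeasure lborel (\<Union>i\<in>F. ball i (a * \<rho> i)) \<le> ennreal (a ^ DIM('a)) * ennreal c * (\<integral>\<^sup>+z. g z \<partial>lborel)"
proof -
  have "emeasure lborel (\<Union>i\<in>F. ball i (a * \<rho> i)) \<le> (\<Sum>i\<in>F. emeasure lborel (ball i (a * \<rho> i)))"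
    using assms(2) by (intro emeasure_subadditive_finite) auto
  also have "\<dots> = (\<Sum>i\<in>F. ennreal (a ^ DIM('a)) * emeasure lborel (ball i (\<rho> i)))"
    using small assms(3) by (intro sum.cong refl emeasure_ball_scale) auto
  also have "\<dots> \<le> (\<Sum>i\<in>F. ennreal (a ^ DIM('a)) * (ennreal c * (\<integral>\<^sup>+z\<in>ball i (\<rho> i). g z \<partial>lborel)))"
    using small by (intro sum_mono mult_left_mono) auto
  also have "\<dots> = ennreal (a ^ DIM('a)) * ennreal c * (\<Sum>i\<in>F. \<integral>\<^sup>+z\<in>ball i (\<rho> i). g z \<partial>lborel)"
    by (simp add: sum_distrib_left mult.assoc)
  also have "\<dots> \<le> ennreal (a ^ DIM('a)) * ennreal c * (\<integral>\<^sup>+z. g z \<partial>lborel)"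
    using assms(2) disj by (intro mult_left_mono sum_set_nn_integral_le_nn_integral) auto
  finally show ?thesis .
qed

lemma centered_maximal_weak_type:
  fixes g :: "'a::euclidean_space \<Rightarrow> ennreal"
  assumes [measurable]: "g \<in> borel_measurable borel" and s: "0 < s"
  shows "emeasure lborel {y. ennreal s < centered_maximal g y}
    \<le> ennreal (5 ^ DIM('a) / s) * (\<integral>\<^sup>+z. g z \<partial>lborel)"
proof (cases "(\<integral>\<^sup>+z. g z \<partial>lborel) = \<infinity>")
  case True
  then show ?thesis using s by (simp add: ennreal_mult_top)
next
  case False
  then obtain T where T: "(\<integral>\<^sup>+z. g z \<partial>lborel) = ennreal T" "0 \<le> T"
    by (cases "\<integral>\<^sup>+z. g z \<partial>lborel") auto
  define E where "E = {y. ennreal s < centered_maximal g y}"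
  have "\<forall>y\<in>E. \<exists>\<rho>>0. ennreal s < ball_avg g y \<rho>"
    unfolding E_def centered_maximal_def by (auto simp: less_SUP_iff)
  then obtain \<rho> where \<rho>: "\<And>y. y \<in> E \<Longrightarrow> 0 < \<rho> y \<and> ennreal s < ball_avg g y (\<rho> y)"
    by metis
  have small: "emeasure lborel (ball y (\<rho> y)) \<le> ennreal (1 / s) * (\<integral>\<^sup>+z\<in>ball y (\<rho> y). g z \<partial>lborel)"
    if "y \<in> E" for y
    using \<rho>[OF that] s by (intro emeasure_ball_le_of_ball_avg_greater) auto
  have bounded: "0 < \<rho> y \<and> \<rho> y \<le> max 1 (T / s / measure lborel (ball (0::'a) 1))" if y: "y \<in> E" for y
  proof -
    have "(\<integral>\<^sup>+z\<in>ball y (\<rho> y). g z \<partial>lborel) \<le> ennreal T"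
      unfolding T(1)[symmetric] by (intro nn_integral_mono) (simp add: indicator_def)
    then have "emeasure lborel (ball y (\<rho> y)) \<le> ennreal (T / s)"
      using small[OF y] s T(2) order_trans[OF _ mult_left_mono]
      by (fastforce simp: ennreal_mult[symmetric])
    then show ?thesis using \<rho>[OF y] radius_le_of_emeasure_ball_le by blast
  qed
  obtain C where C: "countable C" "C \<subseteq> E"
    and disj: "pairwise (\<lambda>i j. disjnt (ball i (\<rho> i)) (ball j (\<rho> j))) C"
    and cover: "E \<subseteq> (\<Union>i\<in>C. ball i (5 * \<rho> i))"
    using Vitali_covering_lemma_balls[where S=E and K=E and a="\<lambda>y. y" and r=\<rho>] bounded
    by (metis (no_types, lifting) UN_I \<rho> centre_in_ball subsetI)
  have "emeasure lborel E \<le> emeasure lborel (\<Union>i\<in>C. ball i (5 * \<rho> i))"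
    using cover by (intro emeasure_mono) (auto intro!: borel_open)
  also have "\<dots> \<le> ennreal (5 ^ DIM('a)) * ennreal (1 / s) * (\<integral>\<^sup>+z. g z \<partial>lborel)"
  proof (rule emeasure_UN_le_of_finite_UN_le[OF C(1)])
    fix F assume "finite F" "F \<subseteq> C"
    then show "emeasure lborel (\<Union>i\<in>F. ball i (5 * \<rho> i))
        \<le> ennreal (5 ^ DIM('a)) * ennreal (1 / s) * (\<integral>\<^sup>+z. g z \<partial>lborel)"
      using C disj small bounded
      by (intro emeasure_UN_scaled_balls_le)
        (auto simp: disjoint_family_on_def pairwise_def disjnt_def less_imp_le subset_iff)
  qed auto
  finally show ?thesis
    using s by (simp add: E_def ennreal_mult[symmetric])
qed

lemma enn_powr_ennreal: "0 \<le> a \<Longrightarrow> enn_powr (ennreal a) p = ennreal (a powr p)"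
  by (simp add: enn_powr_def)

lemma enn_powr_0 [simp]: "enn_powr 0 p = 0"
  by (simp add: enn_powr_def)

lemma enn_powr_top [simp]: "enn_powr top p = top"
  by (simp add: enn_powr_def)

lemma enn_powr_1 [simp]: "enn_powr a 1 = a"
  by (cases a) (auto simp: enn_powr_def)

lemma measurable_enn_powr [measurable]:
  "f \<in> borel_measurable M \<Longrightarrow> (\<lambda>x. enn_powr (f x) p) \<in> borel_measurable M"
proof -
  assume f [measurable]: "f \<in> borel_measurable M"
  have "{x \<in> space M. f x = \<infinity>} = f -` {\<infinity>} \<inter> space M" by auto
  then have [measurable]: "{x \<in> space M. f x = \<infinity>} \<in> sets M"
    using measurable_sets[OF f, of "{\<infinity>}"] by simp
  show ?thesis unfolding enn_powr_def by measurable
qed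

lemma enn_powr_mono: "a \<le> b \<Longrightarrow> 0 < p \<Longrightarrow> enn_powr a p \<le> enn_powr b p"
  by (cases a; cases b) (auto simp: enn_powr_def top_unique intro!: ennreal_leI powr_mono2)

lemma enn_powr_mult: "0 < p \<Longrightarrow> enn_powr (a * b) p = enn_powr a p * enn_powr b p"
  by (cases a; cases b)
    (auto simp: enn_powr_def powr_mult ennreal_mult[symmetric] ennreal_mult_top ennreal_top_mult)

lemma enn_powr_enn_powr: "0 < p \<Longrightarrow> 0 < q \<Longrightarrow> enn_powr (enn_powr a p) q = enn_powr a (p * q)"
  by (cases a) (auto simp: enn_powr_def powr_powr)

lemma mult_enn_powr_minus_one: "1 < p \<Longrightarrow> a * enn_powr a (p - 1) = enn_powr a p"
  by (cases a) (auto simp: enn_powr_def powr_mult_base ennreal_mult[symmetric] ennreal_top_mult)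

lemma enn_powr_add_le:
  assumes "0 < p"
  shows "enn_powr (a + b) p \<le> ennreal (2 powr p) * (enn_powr a p + enn_powr b p)"
proof (cases "a = \<infinity> \<or> b = \<infinity>")
  case True
  then show ?thesis by (auto simp: ennreal_mult_top)
next
  case False
  then obtain A B where ab: "a = ennreal A" "b = ennreal B" "0 \<le> A" "0 \<le> B"
    by (cases a; cases b) auto
  define M where "M = max A B"
  have "(A + B) powr p \<le> (2 * M) powr p"
    using ab assms by (intro powr_mono2) (auto simp: M_def)
  also have "\<dots> = 2 powr p * M powr p"
    using ab by (simp add: M_def powr_mult)
  also have "M powr p \<le> A powr p + B powr p"
    by (simp add: M_def max_def)
  finally have "ennreal ((A + B) powr p) \<le> ennreal (2 powr p * (A powr p + B powr p))"
    by (intro ennreal_leI) simp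
  then show ?thesis
    using ab by (simp add: enn_powr_ennreal ennreal_mult flip: ennreal_plus)
qed

lemma nn_integral_powr_Ioo:
  assumes "0 < p" "0 \<le> A"
  shows "(\<integral>\<^sup>+u. ennreal (u powr (p - 1)) * indicator {0<..<A} u \<partial>lborel) = ennreal (A powr p / p)"
proof -
  have "((\<lambda>u. u powr (p - 1)) has_integral (A powr p / p)) {0..A}"
    using has_integral_powr_from_0[of "p - 1" A] assms by simp
  then have "(\<integral>\<^sup>+u. ennreal (indicator {0..A} u * u powr (p - 1)) \<partial>lborel) = ennreal (A powr p / p)"
    by (rule nn_integral_has_integral_lebesgue[rotated]) simp
  moreover have "AE u in lborel. ennreal (u powr (p - 1)) * indicator {0<..<A} u
      = ennreal (indicator {0..A} u * u powr (p - 1))"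
    using AE_lborel_singleton[of A] by eventually_elim (auto simp: indicator_def)
  ultimately show ?thesis
    by (simp cong: nn_integral_cong_AE)
qed

lemma nn_integral_powr_below:
  assumes p: "0 < p"
  shows "(\<integral>\<^sup>+u. ennreal (u powr (p - 1)) * indicator {u. 0 < u \<and> ennreal u < a} u \<partial>lborel)
    = enn_powr a p * ennreal (1 / p)"
proof (cases a)
  case (real A)
  then have "{u. 0 < u \<and> ennreal u < a} = {0<..<A}" by (auto simp: ennreal_less_iff)
  then show ?thesis
    using nn_integral_powr_Ioo[OF p, of A] real p by (simp add: enn_powr_ennreal ennreal_mult[symmetric])
next
  case top
  define I where "I = (\<integral>\<^sup>+u. ennreal (u powr (p - 1)) * indicator {u. 0 < u \<and> ennreal u < a} u \<partial>lborel)"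
  have lower: "ennreal (k / p) \<le> I" for k :: nat
  proof -
    have "ennreal (k / p) = ennreal ((k powr (1 / p)) powr p / p)"
      using p by (simp add: powr_powr)
    also have "\<dots> = (\<integral>\<^sup>+u. ennreal (u powr (p - 1)) * indicator {0<..<k powr (1 / p)} u \<partial>lborel)"
      using p by (simp add: nn_integral_powr_Ioo)
    also have "\<dots> \<le> I"
      unfolding I_def using top by (intro nn_integral_mono mult_left_mono) (auto simp: indicator_def)
    finally show ?thesis .
  qed
  have "I = \<infinity>"
  proof (rule ccontr)
    assume "I \<noteq> \<infinity>"
    then obtain J where J: "I = ennreal J" "0 \<le> J" by (cases I) auto
    obtain k :: nat where "J * p < k" using reals_Archimedean2 by blast
    moreover have "k / p \<le> J" using lower[of k] J p by (simp add: ennreal_le_iff)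
    ultimately show False using p by (simp add: field_simps)
  qed
  then show ?thesis
    using top p by (simp add: I_def ennreal_top_mult)
qed

lemma nn_integral_enn_powr_layer_cake:
  fixes F :: "'a::euclidean_space \<Rightarrow> ennreal"
  assumes [measurable]: "F \<in> borel_measurable borel" and p: "0 < p"
  shows "(\<integral>\<^sup>+y. enn_powr (F y) p \<partial>lborel) = ennreal p *
    (\<integral>\<^sup>+u. ennreal (u powr (p - 1)) * indicator {0<..} u * emeasure lborel {y. ennreal u < F y} \<partial>lborel)"
proof -
  have "(\<integral>\<^sup>+u. ennreal (u powr (p - 1)) * indicator {0<..} u * emeasure lborel {y. ennreal u < F y} \<partial>lborel)
      = (\<integral>\<^sup>+u. \<integral>\<^sup>+y. ennreal (u powr (p - 1)) * indicator {u. 0 < u \<and> ennreal u < F y} u \<partial>lborel \<partial>lborel)"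
  proof (rule nn_integral_cong)
    fix u :: real
    have "ennreal (u powr (p - 1)) * indicator {0<..} u * emeasure lborel {y. ennreal u < F y}
        = (\<integral>\<^sup>+y. ennreal (u powr (p - 1)) * indicator {0<..} u * indicator {y. ennreal u < F y} y \<partial>lborel)"
      by (subst nn_integral_cmult) simp_all
    also have "\<dots> = (\<integral>\<^sup>+y. ennreal (u powr (p - 1)) * indicator {u. 0 < u \<and> ennreal u < F y} u \<partial>lborel)"
      by (intro nn_integral_cong) (simp add: indicator_def)
    finally show "ennreal (u powr (p - 1)) * indicator {0<..} u * emeasure lborel {y. ennreal u < F y}
        = (\<integral>\<^sup>+y. ennreal (u powr (p - 1)) * indicator {u. 0 < u \<and> ennreal u < F y} u \<partial>lborel)" .
  qed
  also have "\<dots> = (\<integral>\<^sup>+y. \<integral>\<^sup>+u. ennreal (u powr (p - 1)) * indicator {u. 0 < u \<and> ennreal u < F y} u \<partial>lborel \<partial>lborel)"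
    by (rule lborel_pair.Fubini'[symmetric]) (simp add: case_prod_beta indicator_def; measurable)
  also have "\<dots> = (\<integral>\<^sup>+y. enn_powr (F y) p \<partial>lborel) * ennreal (1 / p)"
    using p by (simp add: nn_integral_powr_below nn_integral_multc)
  moreover have "ennreal p * ennreal (1 / p) = 1"
    using p by (simp add: ennreal_mult[symmetric])
  ultimately show ?thesis
    by (metis mult.commute mult.left_commute mult_1_right)
qed

lemma ball_avg_mono: "(\<And>z. g z \<le> h z) \<Longrightarrow> ball_avg g x s \<le> ball_avg h x s"
  unfolding ball_avg_def
  by (intro divide_right_mono_ennreal nn_integral_mono mult_right_mono) auto

lemma ball_avg_add_const:
  fixes x :: "'a::euclidean_space"
  assumes [measurable]: "g \<in> borel_measurable borel" and "0 < s" "0 \<le> c"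
  shows "ball_avg (\<lambda>z. g z + ennreal c) x s = ball_avg g x s + ennreal c"
proof -
  define m where "m = s ^ DIM('a) * measure lborel (ball (0::'a) 1)"
  have m: "0 < m" unfolding m_def using assms(2) by (simp add: content_ball_pos)
  have "(\<integral>\<^sup>+z\<in>ball x s. g z + ennreal c \<partial>lborel)
      = (\<integral>\<^sup>+z\<in>ball x s. g z \<partial>lborel) + ennreal c * emeasure lborel (ball x s)"
    by (simp add: distrib_right nn_integral_add nn_integral_cmult_indicator)
  moreover have "ennreal (1 / m) * (ennreal c * emeasure lborel (ball x s)) = ennreal c"
    using assms m by (simp add: emeasure_ball m_def[symmetric] ennreal_mult[symmetric])
  ultimately show ?thesis
    using assms by (simp add: ball_avg_eq m_def[symmetric] distrib_left)
qed

lemma le_truncation_add_half: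
  "h z \<le> h z * indicator {z. ennreal u < 2 * h z} z + ennreal (u / 2)"
proof (cases "ennreal u < 2 * h z")
  case False
  then have "2 * h z \<le> ennreal u" by simp
  then have "h z \<le> ennreal (u / 2)"
    by (cases "h z") (auto simp: ennreal_mult_top top_unique ennreal_le_iff2 intro: ennreal_leI
        simp flip: ennreal_mult' ennreal_numeral)
  then show ?thesis by (simp add: add_increasing)
qed (simp add: indicator_def)

lemma centered_maximal_le_truncation:
  assumes [measurable]: "h \<in> borel_measurable borel" and u: "0 < u"
  shows "centered_maximal h y
    \<le> centered_maximal (\<lambda>z. h z * indicator {z. ennreal u < 2 * h z} z) y + ennreal (u / 2)"
  unfolding centered_maximal_def[of h]
proof (rule SUP_least)
  fix \<tau> :: real assume "\<tau> \<in> {0<..}"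
  define k where "k z = h z * indicator {z. ennreal u < 2 * h z} z" for z
  have [measurable]: "k \<in> borel_measurable borel" unfolding k_def by measurable
  have "ball_avg h y \<tau> \<le> ball_avg (\<lambda>z. k z + ennreal (u / 2)) y \<tau>"
    unfolding k_def by (intro ball_avg_mono le_truncation_add_half)
  also have "\<dots> = ball_avg k y \<tau> + ennreal (u / 2)"
    using \<open>\<tau> \<in> {0<..}\<close> u by (simp add: ball_avg_add_const)
  also have "\<dots> \<le> centered_maximal k y + ennreal (u / 2)"
    using \<open>\<tau> \<in> {0<..}\<close> by (simp add: ball_avg_le_centered_maximal add_right_mono)
  finally show "ball_avg h y \<tau> \<le> centered_maximal k y + ennreal (u / 2)" .
qed

lemma centered_maximal_level_set_le:
  fixes h :: "'a::euclidean_space \<Rightarrow> ennreal"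
  assumes [measurable]: "h \<in> borel_measurable borel" and u: "0 < u"
  shows "emeasure lborel {y. ennreal u < centered_maximal h y}
    \<le> ennreal (2 * 5 ^ DIM('a) / u) * (\<integral>\<^sup>+z\<in>{z. ennreal u < 2 * h z}. h z \<partial>lborel)"
proof -
  define k where "k z = h z * indicator {z. ennreal u < 2 * h z} z" for z
  have [measurable]: "k \<in> borel_measurable borel" unfolding k_def by measurable
  have "{y. ennreal u < centered_maximal h y} \<subseteq> {y. ennreal (u / 2) < centered_maximal k y}"
  proof safe
    fix y assume y: "ennreal u < centered_maximal h y"
    show "ennreal (u / 2) < centered_maximal k y"
    proof (rule ccontr)
      assume "\<not> ennreal (u / 2) < centered_maximal k y"
      then have "centered_maximal k y + ennreal (u / 2) \<le> ennreal (u / 2) + ennreal (u / 2)"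
        by (simp add: add_right_mono)
      also have "\<dots> = ennreal u"
        using u by (simp flip: ennreal_plus)
      finally show False
        using y centered_maximal_le_truncation[OF assms(1) u, of y] unfolding k_def by simp
    qed
  qed
  then have "emeasure lborel {y. ennreal u < centered_maximal h y}
      \<le> emeasure lborel {y. ennreal (u / 2) < centered_maximal k y}"
    by (intro emeasure_mono) measurable
  also have "\<dots> \<le> ennreal (5 ^ DIM('a) / (u / 2)) * (\<integral>\<^sup>+z. k z \<partial>lborel)"
    using u by (intro centered_maximal_weak_type) auto
  finally show ?thesis
    by (simp add: k_def mult.commute[of 2])
qed

lemma nn_integral_powr_below_double:
  assumes "1 < r"
  shows "(\<integral>\<^sup>+u. ennreal (u powr (r - 2)) * indicator {u. 0 < u \<and> ennreal u < 2 * a} u \<partial>lborel) * a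
    = ennreal (2 powr (r - 1) / (r - 1)) * enn_powr a r"
proof -
  have "(\<integral>\<^sup>+u. ennreal (u powr (r - 2)) * indicator {u. 0 < u \<and> ennreal u < 2 * a} u \<partial>lborel) * a
      = ennreal (1 / (r - 1)) * (enn_powr (2 * a) (r - 1) * a)"
    using assms nn_integral_powr_below[of "r - 1" "2 * a"] by (simp add: mult_ac)
  also have "enn_powr (2 * a) (r - 1) * a = ennreal (2 powr (r - 1)) * (a * enn_powr a (r - 1))"
    using assms enn_powr_ennreal[of 2 "r - 1"] by (simp add: enn_powr_mult mult_ac)
  also have "a * enn_powr a (r - 1) = enn_powr a r"
    using assms by (rule mult_enn_powr_minus_one)
  finally show ?thesis
    using assms by (simp add: ennreal_mult[symmetric] mult.assoc[symmetric])
qed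

lemma centered_maximal_strong_type:
  fixes h :: "'a::euclidean_space \<Rightarrow> ennreal"
  assumes [measurable]: "h \<in> borel_measurable borel" and r: "1 < r"
  shows "(\<integral>\<^sup>+y. enn_powr (centered_maximal h y) r \<partial>lborel)
    \<le> ennreal (r * 5 ^ DIM('a) * 2 powr r / (r - 1)) * (\<integral>\<^sup>+y. enn_powr (h y) r \<partial>lborel)"
proof -
  define c :: real where "c = 2 * 5 ^ DIM('a)"
  define G where "G u z = ennreal c * (ennreal (u powr (r - 2)) * indicator {u. 0 < u \<and> ennreal u < 2 * h z} u * h z)"
    for u :: real and z :: 'a
  have [measurable]: "(\<lambda>(u, z). G u z) \<in> borel_measurable (lborel \<Otimes>\<^sub>M lborel)"
    unfolding G_def by (simp add: case_prod_beta indicator_def; measurable)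
  have level: "ennreal (u powr (r - 1)) * indicator {0<..} u * emeasure lborel {y. ennreal u < centered_maximal h y}
      \<le> (\<integral>\<^sup>+z. G u z \<partial>lborel)" for u :: real
  proof (cases "0 < u")
    case u: True
    have "ennreal (u powr (r - 1)) * ennreal (c / u) = ennreal c * ennreal (u powr (r - 2))"
      using u by (simp add: ennreal_mult[symmetric] powr_diff c_def power2_eq_square)
    moreover have "ennreal (u powr (r - 1)) * emeasure lborel {y. ennreal u < centered_maximal h y}
        \<le> ennreal (u powr (r - 1)) * (ennreal (c / u) * (\<integral>\<^sup>+z\<in>{z. ennreal u < 2 * h z}. h z \<partial>lborel))"
      using centered_maximal_level_set_le[OF assms(1) u] by (intro mult_left_mono) (auto simp: c_def)
    ultimately show ?thesis
      using u unfolding G_def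
      by (simp add: nn_integral_cmult[symmetric] mult.assoc[symmetric])
        (simp add: indicator_def mult_ac)
  qed simp
  have "(\<integral>\<^sup>+y. enn_powr (centered_maximal h y) r \<partial>lborel) = ennreal r *
      (\<integral>\<^sup>+u. ennreal (u powr (r - 1)) * indicator {0<..} u * emeasure lborel {y. ennreal u < centered_maximal h y} \<partial>lborel)"
    using r by (intro nn_integral_enn_powr_layer_cake) auto
  also have "\<dots> \<le> ennreal r * (\<integral>\<^sup>+u. \<integral>\<^sup>+z. G u z \<partial>lborel \<partial>lborel)"
    by (intro mult_left_mono nn_integral_mono level) simp
  also have "(\<integral>\<^sup>+u. \<integral>\<^sup>+z. G u z \<partial>lborel \<partial>lborel) = (\<integral>\<^sup>+z. \<integral>\<^sup>+u. G u z \<partial>lborel \<partial>lborel)"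
    by (rule lborel_pair.Fubini'[symmetric]) measurable
  also have "\<dots> = (\<integral>\<^sup>+z. ennreal (c * 2 powr (r - 1) / (r - 1)) * enn_powr (h z) r \<partial>lborel)"
  proof (rule nn_integral_cong)
    fix z
    have "(\<integral>\<^sup>+u. G u z \<partial>lborel) = ennreal c *
        ((\<integral>\<^sup>+u. ennreal (u powr (r - 2)) * indicator {u. 0 < u \<and> ennreal u < 2 * h z} u \<partial>lborel) * h z)"
      unfolding G_def by (simp add: nn_integral_cmult nn_integral_multc)
    then show "(\<integral>\<^sup>+u. G u z \<partial>lborel) = ennreal (c * 2 powr (r - 1) / (r - 1)) * enn_powr (h z) r"
      using r by (simp add: nn_integral_powr_below_double c_def ennreal_mult[symmetric] mult.assoc[symmetric])
  qed
  also have "\<dots> = ennreal (c * 2 powr (r - 1) / (r - 1)) * (\<integral>\<^sup>+z. enn_powr (h z) r \<partial>lborel)"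
    by (rule nn_integral_cmult) measurable
  finally show ?thesis
    using r by (simp add: c_def ennreal_mult[symmetric] powr_diff mult.assoc[symmetric])
qed

lemma measurable_set_nn_integral_ball [measurable]:
  fixes H :: "'a::euclidean_space \<Rightarrow> ennreal"
  assumes [measurable]: "H \<in> borel_measurable borel"
  shows "(\<lambda>w. \<integral>\<^sup>+z\<in>ball w t. H z \<partial>lborel) \<in> borel_measurable lborel"
proof -
  have "(\<lambda>(w, z). H z * indicator (ball w t) z) \<in> borel_measurable (lborel \<Otimes>\<^sub>M (lborel :: 'a measure))"
    by (simp add: case_prod_beta indicator_def mem_ball; measurable)
  then show ?thesis
    using lborel.borel_measurable_nn_integral_fst by simp
qed

lemma set_nn_integral_ball_le_iterated:
  fixes H :: "'a::euclidean_space \<Rightarrow> ennreal"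
  assumes [measurable]: "H \<in> borel_measurable borel" and t: "0 < t"
  shows "(\<integral>\<^sup>+z\<in>ball y \<tau>. H z \<partial>lborel) * emeasure lborel (ball (0::'a) t)
    \<le> (\<integral>\<^sup>+w\<in>ball y (\<tau> + t). (\<integral>\<^sup>+z\<in>ball w t. H z \<partial>lborel) \<partial>lborel)"
proof -
  define F where "F w z = H z * indicator (ball w t) z * indicator (ball y (\<tau> + t)) w" for w z :: 'a
  have [measurable]: "(\<lambda>(w, z). F w z) \<in> borel_measurable (lborel \<Otimes>\<^sub>M lborel)"
    unfolding F_def by (simp add: case_prod_beta indicator_def mem_ball; measurable)
  have "(\<integral>\<^sup>+z\<in>ball y \<tau>. H z \<partial>lborel) * emeasure lborel (ball (0::'a) t)
      = (\<integral>\<^sup>+z. H z * indicator (ball y \<tau>) z * emeasure lborel (ball z t) \<partial>lborel)"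
    using t by (simp add: nn_integral_multc[symmetric] emeasure_ball)
  also have "\<dots> \<le> (\<integral>\<^sup>+z. \<integral>\<^sup>+w. F w z \<partial>lborel \<partial>lborel)"
  proof (intro nn_integral_mono)
    fix z
    have "H z * indicator (ball y \<tau>) z * indicator (ball z t) w \<le> F w z" for w
      using dist_triangle[of y w z]
      by (auto simp: F_def indicator_def dist_commute)
    then have "(\<integral>\<^sup>+w. H z * indicator (ball y \<tau>) z * indicator (ball z t) w \<partial>lborel) \<le> (\<integral>\<^sup>+w. F w z \<partial>lborel)"
      by (intro nn_integral_mono)
    then show "H z * indicator (ball y \<tau>) z * emeasure lborel (ball z t) \<le> (\<integral>\<^sup>+w. F w z \<partial>lborel)"
      by (simp add: nn_integral_cmult_indicator)
  qed
  also have "\<dots> = (\<integral>\<^sup>+w. \<integral>\<^sup>+z. F w z \<partial>lborel \<partial>lborel)"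
    by (rule lborel_pair.Fubini') measurable
  also have "\<dots> = (\<integral>\<^sup>+w\<in>ball y (\<tau> + t). (\<integral>\<^sup>+z\<in>ball w t. H z \<partial>lborel) \<partial>lborel)"
    unfolding F_def by (intro nn_integral_cong nn_integral_multc) measurable
  finally show ?thesis .
qed

lemma ball_avg_le_ball_avg_of_ball_avgs:
  fixes H :: "'a::euclidean_space \<Rightarrow> ennreal"
  assumes [measurable]: "H \<in> borel_measurable borel" and t: "0 < t" and \<tau>: "0 < \<tau>"
  shows "ball_avg H y \<tau>
    \<le> ennreal (((\<tau> + t) / \<tau>) ^ DIM('a)) * ball_avg (\<lambda>w. ball_avg H w t) y (\<tau> + t)"
proof -
  define V where "V = measure lborel (ball (0::'a) 1)"
  have V: "0 < V" unfolding V_def by (simp add: content_ball_pos)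
  define m where "m s = s ^ DIM('a) * V" for s
  have m: "0 < m s" if "0 < s" for s unfolding m_def using that V by simp
  define I where "I = (\<integral>\<^sup>+z\<in>ball y \<tau>. H z \<partial>lborel)"
  define J where "J = (\<integral>\<^sup>+w\<in>ball y (\<tau> + t). (\<integral>\<^sup>+z\<in>ball w t. H z \<partial>lborel) \<partial>lborel)"
  have "I * ennreal (m t) \<le> J"
    using set_nn_integral_ball_le_iterated[OF assms(1,2), of y \<tau>] t
    by (simp add: I_def J_def m_def V_def emeasure_ball)
  then have "I * ennreal (m t) * ennreal (1 / m t) \<le> J * ennreal (1 / m t)"
    by (rule mult_right_mono) simp
  then have IJ: "I \<le> ennreal (1 / m t) * J"
    using m[OF t] by (simp add: mult.assoc mult.commute[of J] ennreal_mult[symmetric])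
  have "(\<integral>\<^sup>+w\<in>ball y (\<tau> + t). ennreal (1 / m t) * (\<integral>\<^sup>+z\<in>ball w t. H z \<partial>lborel) \<partial>lborel)
      = ennreal (1 / m t) * J"
    unfolding J_def mult.assoc by (rule nn_integral_cmult) measurable
  then have avg: "ball_avg (\<lambda>w. ball_avg H w t) y (\<tau> + t) = ennreal (1 / m (\<tau> + t)) * (ennreal (1 / m t) * J)"
    using t \<tau> unfolding ball_avg_eq[OF t] ball_avg_eq[OF add_pos_pos[OF \<tau> t]] V_def[symmetric] m_def[symmetric]
    by simp
  have "ennreal (((\<tau> + t) / \<tau>) ^ DIM('a)) * ennreal (1 / m (\<tau> + t)) = ennreal (1 / m \<tau>)"
    using t \<tau> V by (simp add: m_def ennreal_mult[symmetric] power_divide)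
  then have "ennreal (((\<tau> + t) / \<tau>) ^ DIM('a)) * ball_avg (\<lambda>w. ball_avg H w t) y (\<tau> + t)
      = ennreal (1 / m \<tau>) * (ennreal (1 / m t) * J)"
    unfolding avg by (simp add: mult.assoc[symmetric])
  moreover have "ball_avg H y \<tau> = ennreal (1 / m \<tau>) * I"
    using \<tau> by (simp add: ball_avg_eq I_def m_def V_def)
  ultimately show ?thesis
    using IJ by (simp add: mult_left_mono)
qed

lemma centered_maximal_localization:
  fixes H :: "'a::euclidean_space \<Rightarrow> ennreal"
  assumes [measurable]: "H \<in> borel_measurable borel" and t: "0 < t" and y: "y \<in> ball x t"
  shows "centered_maximal H y \<le> centered_maximal (\<lambda>z. H z * indicator (ball x (2 * t)) z) y
    + ennreal (2 ^ DIM('a)) * maximal_u (\<lambda>w. ball_avg H w t) x"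
  unfolding centered_maximal_def[of H]
proof (rule SUP_least)
  fix \<tau> :: real assume "\<tau> \<in> {0<..}"
  then have \<tau>: "0 < \<tau>" by simp
  show "ball_avg H y \<tau> \<le> centered_maximal (\<lambda>z. H z * indicator (ball x (2 * t)) z) y
    + ennreal (2 ^ DIM('a)) * maximal_u (\<lambda>w. ball_avg H w t) x"
  proof (cases "\<tau> \<le> t")
    case True
    have "ball y \<tau> \<subseteq> ball x (2 * t)"
    proof
      fix z assume "z \<in> ball y \<tau>"
      then show "z \<in> ball x (2 * t)" using y True dist_triangle[of x z y] by simp
    qed
    then have "ball_avg H y \<tau> = ball_avg (\<lambda>z. H z * indicator (ball x (2 * t)) z) y \<tau>"
      unfolding ball_avg_def by (intro arg_cong2[where f="(/)"] nn_integral_cong) (auto simp: indicator_def)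
    also have "\<dots> \<le> centered_maximal (\<lambda>z. H z * indicator (ball x (2 * t)) z) y"
      using \<tau> by (rule ball_avg_le_centered_maximal)
    finally show ?thesis by (simp add: add_increasing2)
  next
    case False
    have "ball_avg H y \<tau> \<le> ennreal (((\<tau> + t) / \<tau>) ^ DIM('a)) * ball_avg (\<lambda>w. ball_avg H w t) y (\<tau> + t)"
      using assms(1) t \<tau> by (rule ball_avg_le_ball_avg_of_ball_avgs)
    also have "\<dots> \<le> ennreal (2 ^ DIM('a)) * maximal_u (\<lambda>w. ball_avg H w t) x"
    proof (intro mult_mono ennreal_leI power_mono)
      show "(\<tau> + t) / \<tau> \<le> 2" using False \<tau> by (simp add: field_simps)
      have "x \<in> ball y (\<tau> + t)" using y \<tau> by (simp add: dist_commute)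
      then show "ball_avg (\<lambda>w. ball_avg H w t) y (\<tau> + t) \<le> maximal_u (\<lambda>w. ball_avg H w t) x"
        unfolding maximal_u_def using \<tau> t by (intro SUP_upper2[of "(y, \<tau> + t)"]) auto
    qed (use \<tau> t in auto)
    finally show ?thesis by (simp add: add_increasing)
  qed
qed

lemma enn_powr_root_le:
  assumes r: "1 \<le> r" and "0 \<le> c\<^sub>1" "0 \<le> c\<^sub>2"
    and a: "a \<le> ennreal c\<^sub>1 * b + ennreal c\<^sub>2 * enn_powr u r"
  shows "enn_powr a (1 / r)
    \<le> ennreal (2 * c\<^sub>1 powr (1 / r)) * enn_powr b (1 / r) + ennreal (2 * c\<^sub>2 powr (1 / r)) * u"
proof -
  have r0: "0 < r" "0 < 1 / r" using r by auto
  have two: "ennreal (2 powr (1 / r)) \<le> 2"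
    using r powr_mono[of "1 / r" 1 2] ennreal_leI[of "2 powr (1 / r)" 2] by simp
  have "enn_powr a (1 / r) \<le> enn_powr (ennreal c\<^sub>1 * b + ennreal c\<^sub>2 * enn_powr u r) (1 / r)"
    using a r0(2) by (rule enn_powr_mono)
  also have "\<dots> \<le> ennreal (2 powr (1 / r)) *
      (enn_powr (ennreal c\<^sub>1 * b) (1 / r) + enn_powr (ennreal c\<^sub>2 * enn_powr u r) (1 / r))"
    using r0(2) by (rule enn_powr_add_le)
  also have "\<dots> = ennreal (2 powr (1 / r)) *
      (ennreal (c\<^sub>1 powr (1 / r)) * enn_powr b (1 / r) + ennreal (c\<^sub>2 powr (1 / r)) * u)"
    using r0 assms(2,3) by (simp add: enn_powr_mult enn_powr_ennreal enn_powr_enn_powr)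
  also have "\<dots> \<le> 2 * (ennreal (c\<^sub>1 powr (1 / r)) * enn_powr b (1 / r) + ennreal (c\<^sub>2 powr (1 / r)) * u)"
    using two by (rule mult_right_mono) simp
  also have "\<dots> = ennreal (2 * c\<^sub>1 powr (1 / r)) * enn_powr b (1 / r) + ennreal (2 * c\<^sub>2 powr (1 / r)) * u"
    by (simp add: ennreal_mult distrib_left mult.assoc)
  finally show ?thesis .
qed

lemma enn_powr_centered_maximal_localization:
  fixes H :: "'a::euclidean_space \<Rightarrow> ennreal"
  assumes [measurable]: "H \<in> borel_measurable borel" and r: "0 < r" and "0 < t" "y \<in> ball x t"
  shows "enn_powr (centered_maximal H y) r
    \<le> ennreal (2 powr r) * (enn_powr (centered_maximal (\<lambda>z. H z * indicator (ball x (2 * t)) z) y) r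
      + enn_powr (ennreal (2 ^ DIM('a)) * maximal_u (\<lambda>w. ball_avg H w t) x) r)"
proof -
  have "enn_powr (centered_maximal H y) r
      \<le> enn_powr (centered_maximal (\<lambda>z. H z * indicator (ball x (2 * t)) z) y
        + ennreal (2 ^ DIM('a)) * maximal_u (\<lambda>w. ball_avg H w t) x) r"
    using centered_maximal_localization[OF assms(1,3,4)] r by (rule enn_powr_mono)
  also have "\<dots> \<le> ennreal (2 powr r) * (enn_powr (centered_maximal (\<lambda>z. H z * indicator (ball x (2 * t)) z) y) r
      + enn_powr (ennreal (2 ^ DIM('a)) * maximal_u (\<lambda>w. ball_avg H w t) x) r)"
    using r by (rule enn_powr_add_le)
  finally show ?thesis .
qed

lemma set_nn_integral_centered_maximal_powr_le:
  fixes H :: "'a::euclidean_space \<Rightarrow> ennreal" and x :: 'a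
  assumes [measurable]: "H \<in> borel_measurable borel" and r: "1 < r" and t: "0 < t"
  defines "K \<equiv> r * 5 ^ DIM('a) * 2 powr r / (r - 1)"
    and "B \<equiv> enn_powr (ennreal (2 ^ DIM('a)) * maximal_u (\<lambda>w. ball_avg H w t) x) r"
  shows "(\<integral>\<^sup>+y\<in>ball x t. enn_powr (centered_maximal H y) r \<partial>lborel)
    \<le> ennreal (2 powr r) * (ennreal K * (\<integral>\<^sup>+y\<in>ball x (2 * t). enn_powr (H y) r \<partial>lborel)
      + B * emeasure lborel (ball x t))"
proof -
  define H\<^sub>1 where "H\<^sub>1 = (\<lambda>z. H z * indicator (ball x (2 * t)) z)"
  have [measurable]: "H\<^sub>1 \<in> borel_measurable borel" unfolding H\<^sub>1_def by measurable
  have "(\<integral>\<^sup>+y\<in>ball x t. enn_powr (centered_maximal H y) r \<partial>lborel)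
      \<le> (\<integral>\<^sup>+y. ennreal (2 powr r) * (enn_powr (centered_maximal H\<^sub>1 y) r + B * indicator (ball x t) y) \<partial>lborel)"
    using enn_powr_centered_maximal_localization[OF assms(1) _ t] r
    by (intro nn_integral_mono) (auto simp: H\<^sub>1_def B_def indicator_def)
  also have "\<dots> = ennreal (2 powr r) * ((\<integral>\<^sup>+y. enn_powr (centered_maximal H\<^sub>1 y) r \<partial>lborel)
      + B * emeasure lborel (ball x t))"
    by (simp add: nn_integral_cmult nn_integral_add nn_integral_cmult_indicator)
  also have "(\<integral>\<^sup>+y. enn_powr (centered_maximal H\<^sub>1 y) r \<partial>lborel) \<le> ennreal K * (\<integral>\<^sup>+y. enn_powr (H\<^sub>1 y) r \<partial>lborel)"
    unfolding K_def using r by (intro centered_maximal_strong_type) auto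
  also have "(\<integral>\<^sup>+y. enn_powr (H\<^sub>1 y) r \<partial>lborel) = (\<integral>\<^sup>+y\<in>ball x (2 * t). enn_powr (H y) r \<partial>lborel)"
    using r by (intro nn_integral_cong) (simp add: H\<^sub>1_def indicator_def)
  finally show ?thesis
    by (simp add: add_right_mono mult_left_mono)
qed

lemma ball_avg_centered_maximal_powr_le:
  fixes H :: "'a::euclidean_space \<Rightarrow> ennreal"
  assumes [measurable]: "H \<in> borel_measurable borel" and r: "1 < r" and t: "0 < t"
  defines "K \<equiv> r * 5 ^ DIM('a) * 2 powr r / (r - 1)"
  shows "ball_avg (\<lambda>y. enn_powr (centered_maximal H y) r) x t
    \<le> ennreal (2 powr r * K * 2 ^ DIM('a)) * ball_avg (\<lambda>y. enn_powr (H y) r) x (2 * t)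
      + ennreal (2 powr r) * enn_powr (ennreal (2 ^ DIM('a)) * maximal_u (\<lambda>w. ball_avg H w t) x) r"
    (is "_ \<le> _ * ?A + _ * ?B")
proof -
  define D :: real where "D = 2 ^ DIM('a)"
  define m where "m = t ^ DIM('a) * measure lborel (ball (0::'a) 1)"
  have m: "0 < m" unfolding m_def using t by (simp add: content_ball_pos)
  have K: "0 \<le> K" unfolding K_def using r by simp
  have "ennreal m * ball_avg (\<lambda>y. enn_powr (centered_maximal H y) r) x t
      \<le> ennreal (2 powr r) * (ennreal K * (ennreal (D * m) * ?A) + ?B * ennreal m)"
    using set_nn_integral_centered_maximal_powr_le[OF assms(1) r t, of x] t
    by (simp add: set_nn_integral_ball_eq_ball_avg emeasure_ball m_def D_def K_def
        power_mult_distrib mult_ac)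
  also have "\<dots> = ennreal m * (ennreal (2 powr r * K * D) * ?A + ennreal (2 powr r) * ?B)"
  proof -
    have "ennreal (D * m) = ennreal D * ennreal m"
      "ennreal (2 powr r * K * D) = ennreal (2 powr r) * ennreal K * ennreal D"
      using K m by (simp_all add: D_def ennreal_mult)
    then show ?thesis by (simp add: distrib_left mult_ac)
  qed
  finally have integral: "ennreal m * ball_avg (\<lambda>y. enn_powr (centered_maximal H y) r) x t
      \<le> ennreal m * (ennreal (2 powr r * K * D) * ?A + ennreal (2 powr r) * ?B)" .
  have "ennreal (1 / m) * ennreal m = 1" using m by (simp add: ennreal_mult[symmetric])
  then show ?thesis
    using mult_left_mono[OF integral, of "ennreal (1 / m)"] unfolding D_def
    by (simp add: mult.assoc[symmetric])
qed

lemma centered_maximal_local_estimate: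
  assumes r: "1 < r"
  shows "\<exists>C\<ge>0. \<forall>(H :: 'a::euclidean_space \<Rightarrow> ennreal) x t. H \<in> borel_measurable borel \<longrightarrow> 0 < t \<longrightarrow>
    enn_powr (ball_avg (\<lambda>y. enn_powr (centered_maximal H y) r) x t) (1 / r)
      \<le> ennreal C * enn_powr (ball_avg (\<lambda>y. enn_powr (H y) r) x (2 * t)) (1 / r)
        + ennreal C * maximal_u (\<lambda>w. ball_avg H w t) x"
proof -
  define D :: real where "D = 2 ^ DIM('a)"
  define c where "c = 2 * (2 powr r * (r * 5 ^ DIM('a) * 2 powr r / (r - 1)) * D) powr (1 / r)"
  have two: "2 * (2 powr r) powr (1 / r) = 4"
    using r by (simp add: powr_powr)
  show ?thesis
  proof (intro exI[of _ "c + 4 * D"] conjI allI impI)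
    show "0 \<le> c + 4 * D" by (simp add: c_def D_def)
    fix H :: "'a \<Rightarrow> ennreal" and x and t :: real
    assume H: "H \<in> borel_measurable borel" and t: "0 < t"
    define A where "A = ball_avg (\<lambda>y. enn_powr (H y) r) x (2 * t)"
    define U where "U = maximal_u (\<lambda>w. ball_avg H w t) x"
    have "enn_powr (ball_avg (\<lambda>y. enn_powr (centered_maximal H y) r) x t) (1 / r)
        \<le> ennreal c * enn_powr A (1 / r) + ennreal 4 * (ennreal D * U)"
      using enn_powr_root_le[OF _ _ _ ball_avg_centered_maximal_powr_le[OF H r t]] r
      unfolding A_def U_def c_def D_def two[symmetric] by simp
    also have "\<dots> = ennreal c * enn_powr A (1 / r) + ennreal (4 * D) * U"
      by (simp add: D_def ennreal_mult mult.assoc)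
    also have "\<dots> \<le> ennreal (c + 4 * D) * enn_powr A (1 / r) + ennreal (c + 4 * D) * U"
      by (intro add_mono mult_right_mono ennreal_leI) (auto simp: c_def D_def)
    finally show "enn_powr (ball_avg (\<lambda>y. enn_powr (centered_maximal H y) r) x t) (1 / r)
      \<le> ennreal (c + 4 * D) * enn_powr A (1 / r) + ennreal (c + 4 * D) * U" .
  qed
qed

theorem lemma4p1:
  fixes r :: real
  assumes "1 < r"
  shows "\<exists>C::real. C \<ge> 0 \<and> (\<forall>(x::'a::euclidean_space) t (f::'a \<Rightarrow> real).
           t > 0 \<longrightarrow> locally_Lp r f \<longrightarrow>
           enn_powr (ball_avg (\<lambda>y. enn_powr (maximal_c f y) r) x t) (1 / r)
             \<le> ennreal C * enn_powr (ball_avg (\<lambda>y. ennreal (\<bar>f y\<bar> powr r)) x (2 * t)) (1 / r)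
               + ennreal C * maximal_u (\<lambda>w. ball_avg (\<lambda>z. ennreal \<bar>f z\<bar>) w t) x)"
proof -
  obtain C where C: "C \<ge> 0" and estimate: "\<And>(H :: 'a \<Rightarrow> ennreal) x t. H \<in> borel_measurable borel \<Longrightarrow> 0 < t \<Longrightarrow>
      enn_powr (ball_avg (\<lambda>y. enn_powr (centered_maximal H y) r) x t) (1 / r)
        \<le> ennreal C * enn_powr (ball_avg (\<lambda>y. enn_powr (H y) r) x (2 * t)) (1 / r)
          + ennreal C * maximal_u (\<lambda>w. ball_avg H w t) x"
    using centered_maximal_local_estimate[OF assms] by blast
  show ?thesis
  proof (intro exI[of _ C] conjI allI impI C)
    fix x :: 'a and t :: real and f :: "'a \<Rightarrow> real"
    assume t: "t > 0" and "locally_Lp r f"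
    then have "f \<in> borel_measurable lebesgue" by (simp add: locally_Lp_def)
    then obtain g where g: "g \<in> borel_measurable lborel" and "AE y in lborel. f y = g y"
      using completion_ex_borel_measurable_real by blast
    then have "AE y in lebesgue. f y = g y" by (intro AE_completion)
    then have fg: "ball_avg (\<lambda>z. ennreal \<bar>f z\<bar>) c s = ball_avg (\<lambda>z. ennreal \<bar>g z\<bar>) c s"
        "ball_avg (\<lambda>z. ennreal (\<bar>f z\<bar> powr r)) c s = ball_avg (\<lambda>z. ennreal (\<bar>g z\<bar> powr r)) c s" for c s
      by (auto intro!: ball_avg_cong_AE)
    have "(\<lambda>z. ennreal \<bar>g z\<bar>) \<in> borel_measurable borel" using g by simp
    from estimate[OF this t, of x] show "enn_powr (ball_avg (\<lambda>y. enn_powr (maximal_c f y) r) x t) (1 / r)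
      \<le> ennreal C * enn_powr (ball_avg (\<lambda>y. ennreal (\<bar>f y\<bar> powr r)) x (2 * t)) (1 / r)
        + ennreal C * maximal_u (\<lambda>w. ball_avg (\<lambda>z. ennreal \<bar>f z\<bar>) w t) x"
      by (simp add: maximal_c_def centered_maximal_def fg enn_powr_ennreal)
  qed
qed

end
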